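(* Let $\mathcal R\subset\mathcal G$ be finite with $\mathrm{id}\in\mathcal R$. Then the seminorms $\|\cdot\|_{\mathcal R,0}$ and $[\cdot]_{\mathcal R,0}$ on $U_{\mathrm{per}}$ are equivalent.
   Context: Euclidean group: $\mathrm E(n)$ consists of pairs $(A|b)$, $A\in\mathrm O(n)$, $b\in\mathbb R^n$, acting by $(A|b)\cdot x=Ax+b$, product $(A_1|b_1)(A_2|b_2)=(A_1A_2|b_1+A_1b_2)$; $\mathrm{rot}(A|b)=A$. Standing setting: $d=d_1+d_2$; $\mathcal S<\mathrm E(d_2)$ is a space group with translation subgroup $\mathcal T_{\mathcal S}$; $A\oplus(B|b)=(\mathrm{diag}(A,B)|(0,b))$. $\mathcal G$ is a discrete subgroup of $\mathrm E(d)$ contained in $\{A\oplus s:A\in\mathrm O(d_1),s\in\mathcal S\}$ projecting onto $\mathcal S$; $\mathcal T\subset\mathcal G$ maps bijectively onto $\mathcal T_{\mathcal S}$ under the projection. There is $m_0$ such that $\mathcal T^N=\{t^N:t\in\mathcal T\}$ is a normal finite-index subgroup of $\mathcal G$ isomorphic to $\mathbb Z^{d_2}$ iff $N\in\mathcal M=m_0\mathbb N$; $\mathcal C_N$ is a fixed set of representatives of $\mathcal G/\mathcal T^N$. $U_{\mathrm{per}}$: maps $u:\mathcal G\to\mathbb R^d$ with $u(gt)=u(g)$ for all $g\in\mathcal G$, $t\in\mathcal T^N$, for some $N\in\mathcal M$ ($\mathcal T^N$-periodic). $x_0\in\mathbb R^d$ with $g\mapsto g\cdot x_0$ injective; $d_{\mathrm{aff}}=\dim\mathrm{aff}(\mathcal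 G\cdot x_0)$; $\mathcal G\cdot x_0\subset\{0_{d-d_{\mathrm{aff}}}\}\times\mathbb R^{d_{\mathrm{aff}}}$ and $\mathcal G$ acts trivially on $\mathbb R^{d-d_{\mathrm{aff}}}\times\{0\}$. Let $\mathrm{Skew}_{0,d_2}(d)=\{\begin{pmatrix}S_1&S_2\\-S_2^T&0\end{pmatrix}:S_1\in\mathrm{Skew}(d_1),S_2\in\mathbb R^{d_1\times d_2}\}$. For $\mathcal R\subset\mathcal G$: $U_{\mathrm{trans}}(\mathcal R)=\{u:\mathcal R\to\mathbb R^d:\exists a\ \forall g:\mathrm{rot}(g)u(g)=a\}$, $U_{\mathrm{rot},0}(\mathcal R)=\{u:\mathcal R\to\mathbb R^d:\exists S\in\mathrm{Skew}_{0,d_2}(d)\ \forall g\in\mathcal R:\mathrm{rot}(g)u(g)=S(g\cdot x_0-x_0)\}$, $U_{\mathrm{iso},0}(\mathcal R)=U_{\mathrm{trans}}(\mathcal R)+U_{\mathrm{rot},0}(\mathcal R)$. For finite $\mathcal R$, distances are in the Euclidean norm of $(\mathbb R^d)^{\mathcal R}$; the discrete derivative is $\nabla_{\mathcal R}u(g)(h)=u(gh)-\mathrm{rot}(h)^Tu(g)$, $h\in\mathcal R$. For $\mathcal T^N$-periodic $u$: $\|u\|_{\mathcal R,0}=\big(\frac1{|\mathcal C_N|}\sum_{g\in\mathcal C_N}\mathrm{dist}(u(g\,\cdot)|_{\mathcal R},U_{\mathrm{iso},0}(\mathcal R))^2\big)^{1/2}$ and $[u]_{\mathcal R,0}=\big(\frac1{|\mathcal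 C_N|}\sum_{g\in\mathcal C_N}\mathrm{dist}(\nabla_{\mathcal R}u(g),U_{\mathrm{rot},0}(\mathcal R))^2\big)^{1/2}$. *)

theory Defs
  imports "HOL-Analysis.Analysis"
begin

text \<open>Elements (A|b) of the Euclidean group E(d), with R^d = real^'n.\<close>
type_synonym 'n eel = "(real^'n^'n) \<times> (real^'n)"

definition Eucl :: "'n::finite eel set" where
  "Eucl = {(A, b). orthogonal_matrix A}"

definition emul :: "'n::finite eel \<Rightarrow> 'n eel \<Rightarrow> 'n eel" where
  "emul g h = (fst g ** fst h, snd g + fst g *v snd h)"

definition eone :: "'n::finite eel" where
  "eone = (mat 1, 0)"

definition einv :: "'n::finite eel \<Rightarrow> 'n eel" where
  "einv g = (transpose (fst g), - (transpose (fst g) *v snd g))"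

primrec epow :: "'n::finite eel \<Rightarrow> nat \<Rightarrow> 'n eel" where
  "epow g 0 = eone"
| "epow g (Suc n) = emul g (epow g n)"

definition rot :: "'n::finite eel \<Rightarrow> real^'n^'n" where
  "rot g = fst g"

definition act :: "'n::finite eel \<Rightarrow> real^'n \<Rightarrow> real^'n" where
  "act g x = fst g *v x + snd g"

definition is_subgroup :: "'n::finite eel set \<Rightarrow> 'n eel set \<Rightarrow> bool" where
  "is_subgroup H G \<longleftrightarrow> H \<subseteq> G \<and> eone \<in> H \<and>
     (\<forall>g\<in>H. \<forall>h\<in>H. emul g h \<in> H) \<and> (\<forall>g\<in>H. einv g \<in> H)"

definition discrete_set :: "'n::finite eel set \<Rightarrow> bool" where
  "discrete_set G \<longleftrightarrow> (\<forall>x\<in>G. \<exists>e>0. \<forall>y\<in>G. dist y x < e \<longrightarrow> y = x)"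

definition normal_fin_index :: "'n::finite eel set \<Rightarrow> 'n eel set \<Rightarrow> bool" where
  "normal_fin_index H G \<longleftrightarrow> is_subgroup H G \<and>
     (\<forall>g\<in>G. \<forall>h\<in>H. emul (emul g h) (einv g) \<in> H) \<and>
     finite ((\<lambda>g. (\<lambda>h. emul g h) ` H) ` G)"

definition iso_Zk :: "'n::finite eel set \<Rightarrow> nat \<Rightarrow> bool" where
  "iso_Zk H k \<longleftrightarrow> (\<exists>f. bij_betw f {v :: nat \<Rightarrow> int. \<forall>i\<ge>k. v i = 0} H \<and>
     (\<forall>v w. (\<forall>i\<ge>k. v i = 0) \<longrightarrow> (\<forall>i\<ge>k. w i = 0) \<longrightarrow> f (\<lambda>i. v i + w i) = emul (f v) (f w)))"

text \<open>Coordinate splitting: D1 is the set of the d1 coordinates of the O(d1) factor,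
  its complement carries the R^{d2} factor.  E(d2) is embedded as the elements acting
  as identity on the D1-coordinates.\<close>
definition Eucl2 :: "'n::finite set \<Rightarrow> 'n eel set" where
  "Eucl2 D1 = {g \<in> Eucl. (\<forall>i j. (i \<in> D1 \<or> j \<in> D1) \<longrightarrow> fst g $ i $ j = (if i = j then 1 else 0))
                         \<and> (\<forall>i\<in>D1. snd g $ i = 0)}"

text \<open>Projection A \<oplus> s \<mapsto> s.\<close>
definition proj2 :: "'n::finite set \<Rightarrow> 'n eel \<Rightarrow> 'n eel" where
  "proj2 D1 g = ((\<chi> i j. if i \<in> D1 \<or> j \<in> D1 then (if i = j then 1 else 0) else fst g $ i $ j),
                 (\<chi> i. if i \<in> D1 then 0 else snd g $ i))"

text \<open>g is of the form A \<oplus> s with A in O(d1), s in S.\<close>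
definition is_dsum :: "'n::finite set \<Rightarrow> 'n eel set \<Rightarrow> 'n eel \<Rightarrow> bool" where
  "is_dsum D1 S g \<longleftrightarrow> g \<in> Eucl \<and> (\<forall>i j. (i \<in> D1) \<noteq> (j \<in> D1) \<longrightarrow> fst g $ i $ j = 0)
     \<and> (\<forall>i\<in>D1. snd g $ i = 0) \<and> proj2 D1 g \<in> S"

definition transl_sub :: "'n::finite eel set \<Rightarrow> 'n eel set" where
  "transl_sub S = {s \<in> S. fst s = mat 1}"

definition space_group :: "'n::finite set \<Rightarrow> 'n eel set \<Rightarrow> bool" where
  "space_group D1 S \<longleftrightarrow> is_subgroup S (Eucl2 D1) \<and> discrete_set S \<and>
     span (snd ` transl_sub S) = {v. \<forall>i\<in>D1. v $ i = 0}"

definition TN :: "'n::finite eel set \<Rightarrow> nat \<Rightarrow> 'n eel set" where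
  "TN T N = (\<lambda>t. epow t N) ` T"

definition is_reps :: "'n::finite eel set \<Rightarrow> 'n eel set \<Rightarrow> 'n eel set \<Rightarrow> bool" where
  "is_reps C G H \<longleftrightarrow> C \<subseteq> G \<and> (\<forall>g\<in>G. \<exists>!c. c \<in> C \<and> (\<exists>h\<in>H. g = emul c h))"

definition standing_setting ::
  "'n::finite set \<Rightarrow> 'n eel set \<Rightarrow> 'n eel set \<Rightarrow> 'n eel set \<Rightarrow> nat \<Rightarrow> (nat \<Rightarrow> 'n eel set)
   \<Rightarrow> real^'n \<Rightarrow> 'n set \<Rightarrow> bool" where
  "standing_setting D1 S G T m0 C x0 K \<longleftrightarrow>
     space_group D1 S \<and>
     is_subgroup G Eucl \<and> discrete_set G \<and>
     (\<forall>g\<in>G. is_dsum D1 S g) \<and> proj2 D1 ` G = S \<and>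
     T \<subseteq> G \<and> bij_betw (proj2 D1) T (transl_sub S) \<and>
     m0 > 0 \<and>
     (\<forall>N>0. (normal_fin_index (TN T N) G \<and> iso_Zk (TN T N) (card (- D1))) \<longleftrightarrow> m0 dvd N) \<and>
     (\<forall>N>0. m0 dvd N \<longrightarrow> is_reps (C N) G (TN T N)) \<and>
     inj_on (\<lambda>g. act g x0) G \<and>
     int (card K) = int CARD('n) - aff_dim ((\<lambda>g. act g x0) ` G) \<and>
     (\<forall>g\<in>G. \<forall>i\<in>K. act g x0 $ i = 0) \<and>
     (\<forall>g\<in>G. \<forall>v. (\<forall>i. i \<notin> K \<longrightarrow> v $ i = 0) \<longrightarrow> rot g *v v = v)"

definition Skew0 :: "'n::finite set \<Rightarrow> (real^'n^'n) set" where
  "Skew0 D1 = {S. transpose S = - S \<and> (\<forall>i j. i \<notin> D1 \<and> j \<notin> D1 \<longrightarrow> S $ i $ j = 0)}"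

definition U_trans :: "'n::finite eel set \<Rightarrow> ('n eel \<Rightarrow> real^'n) set" where
  "U_trans R = {u. \<exists>a. \<forall>g\<in>R. rot g *v u g = a}"

definition U_rot0 :: "'n::finite set \<Rightarrow> real^'n \<Rightarrow> 'n eel set \<Rightarrow> ('n eel \<Rightarrow> real^'n) set" where
  "U_rot0 D1 x0 R = {u. \<exists>S\<in>Skew0 D1. \<forall>g\<in>R. rot g *v u g = S *v (act g x0 - x0)}"

definition U_iso0 :: "'n::finite set \<Rightarrow> real^'n \<Rightarrow> 'n eel set \<Rightarrow> ('n eel \<Rightarrow> real^'n) set" where
  "U_iso0 D1 x0 R = {(\<lambda>g. u g + v g) | u v. u \<in> U_trans R \<and> v \<in> U_rot0 D1 x0 R}"

definition normR :: "'n::finite eel set \<Rightarrow> ('n eel \<Rightarrow> real^'n) \<Rightarrow> real" where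
  "normR R v = sqrt (\<Sum>h\<in>R. (norm (v h))\<^sup>2)"

definition distR :: "'n::finite eel set \<Rightarrow> ('n eel \<Rightarrow> real^'n) \<Rightarrow> ('n eel \<Rightarrow> real^'n) set \<Rightarrow> real" where
  "distR R v U = Inf ((\<lambda>w. normR R (\<lambda>h. v h - w h)) ` U)"

definition grad :: "'n::finite eel set \<Rightarrow> ('n eel \<Rightarrow> real^'n) \<Rightarrow> 'n eel \<Rightarrow> ('n eel \<Rightarrow> real^'n)" where
  "grad R u g = (\<lambda>h. u (emul g h) - transpose (rot h) *v u g)"

definition periodic :: "'n::finite eel set \<Rightarrow> 'n eel set \<Rightarrow> ('n eel \<Rightarrow> real^'n) \<Rightarrow> bool" where
  "periodic G H u \<longleftrightarrow> (\<forall>g\<in>G. \<forall>t\<in>H. u (emul g t) = u g)"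

text \<open>The seminorms, computed with the fixed set of representatives C = C_N.\<close>
definition norm_R0 :: "'n::finite set \<Rightarrow> real^'n \<Rightarrow> 'n eel set \<Rightarrow> 'n eel set
                       \<Rightarrow> ('n eel \<Rightarrow> real^'n) \<Rightarrow> real" where
  "norm_R0 D1 x0 R C u = sqrt ((1 / real (card C)) *
      (\<Sum>g\<in>C. (distR R (\<lambda>h. u (emul g h)) (U_iso0 D1 x0 R))\<^sup>2))"

definition semi_R0 :: "'n::finite set \<Rightarrow> real^'n \<Rightarrow> 'n eel set \<Rightarrow> 'n eel set
                       \<Rightarrow> ('n eel \<Rightarrow> real^'n) \<Rightarrow> real" where
  "semi_R0 D1 x0 R C u = sqrt ((1 / real (card C)) *
      (\<Sum>g\<in>C. (distR R (grad R u g) (U_rot0 D1 x0 R))\<^sup>2))"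

end

theory Submission
  imports Defs
begin

text \<open>Both inequalities hold pointwise in g with constants depending only on card R. The map h \<mapsto> rot(h)^T u(g) lies in U_trans, and adding it to an
  element of U_rot0 turns the deviation of the discrete derivative of u at g from U_rot0 into the
  deviation of u(g \<cdot>) from U_iso0; so the second seminorm dominates the first with constant 1.
  Conversely, let w = t + r with t \<in> U_trans, r \<in> U_rot0 and put e = u(g \<cdot>) - w. Since
  r(id) = 0, the discrete derivative minus r is h \<mapsto> e(h) - rot(h)^T e(id), and
  |e(id)| \<le> normR R e gives the constant 1 + sqrt |R|.\<close>

lemma norm_orthogonal_matrix_mult:
  fixes A :: "real^'n::finite^'n"
  assumes "orthogonal_matrix A"
  shows "norm (A *v x) = norm x"
proof -
  have "orthogonal_transformation ((*v) A)"
    using assms by (simp add: orthogonal_transformation_matrix matrix_of_matrix_vector_mul)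
  then show ?thesis by (simp add: orthogonal_transformation_norm)
qed

lemma orthogonal_matrix_vector_cancel:
  fixes A :: "real^'n::finite^'n"
  assumes "orthogonal_matrix A"
  shows "A *v (transpose A *v x) = x" "transpose A *v (A *v x) = x"
  using assms unfolding orthogonal_matrix_def
  by (metis matrix_vector_mul_assoc matrix_vector_mul_lid)+

lemma rot_eone [simp]: "rot eone = mat 1"
  by (simp add: rot_def eone_def)

lemma act_eone [simp]: "act eone x = x"
  by (simp add: act_def eone_def)

lemma emul_eone_right [simp]: "emul g eone = g"
  by (simp add: emul_def eone_def)

lemma standing_setting_orthogonal_rot:
  assumes "standing_setting D1 S G T m0 C x0 K" "h \<in> G"
  shows "orthogonal_matrix (rot h)"
proof -
  have "G \<subseteq> Eucl"
    using assms(1) unfolding standing_setting_def is_subgroup_def by blast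
  with assms(2) show ?thesis by (auto simp: Eucl_def rot_def)
qed

lemma normR_eq_L2_set: "normR R v = L2_set (\<lambda>h. norm (v h)) R"
  unfolding normR_def L2_set_def by simp

lemma normR_nonneg: "0 \<le> normR R v"
  unfolding normR_def by (simp add: sum_nonneg)

lemma normR_cong: "(\<And>h. h \<in> R \<Longrightarrow> v h = w h) \<Longrightarrow> normR R v = normR R w"
  unfolding normR_def by (metis (no_types, lifting) sum.cong)

lemma normR_add_le: "normR R (\<lambda>h. v h + w h) \<le> normR R v + normR R w"
proof -
  have "normR R (\<lambda>h. v h + w h) \<le> L2_set (\<lambda>h. norm (v h) + norm (w h)) R"
    unfolding normR_eq_L2_set by (rule L2_set_mono) (auto intro: norm_triangle_ineq)
  also have "\<dots> \<le> normR R v + normR R w"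
    unfolding normR_eq_L2_set by (rule L2_set_triangle_ineq)
  finally show ?thesis .
qed

lemma normR_const_norm:
  assumes "\<And>h. h \<in> R \<Longrightarrow> norm (v h) = r" "0 \<le> r"
  shows "normR R v = sqrt (real (card R)) * r"
proof -
  have "normR R v = sqrt (real (card R) * r\<^sup>2)"
    unfolding normR_def using assms(1) by simp
  also have "\<dots> = sqrt (real (card R)) * r"
    using assms(2) by (simp add: real_sqrt_mult)
  finally show ?thesis .
qed

lemma norm_le_normR:
  assumes "finite R" "h \<in> R"
  shows "norm (v h) \<le> normR R v"
proof -
  have "(norm (v h))\<^sup>2 \<le> (\<Sum>h\<in>R. (norm (v h))\<^sup>2)"
    using assms by (intro member_le_sum) auto
  then show ?thesis
    unfolding normR_def by (metis real_sqrt_abs abs_norm_cancel real_sqrt_le_mono)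
qed

lemma distR_nonneg: "U \<noteq> {} \<Longrightarrow> 0 \<le> distR R v U"
  unfolding distR_def by (rule cInf_greatest) (auto simp: normR_nonneg)

lemma distR_le_scaled:
  assumes "U \<noteq> {}" "0 < c"
    and "\<And>w. w \<in> U \<Longrightarrow> \<exists>w'\<in>U'. normR R (\<lambda>h. v' h - w' h) \<le> c * normR R (\<lambda>h. v h - w h)"
  shows "distR R v' U' \<le> c * distR R v U"
proof -
  have "distR R v' U' / c \<le> distR R v U"
    unfolding distR_def
  proof (rule cInf_greatest)
    show "(\<lambda>w. normR R (\<lambda>h. v h - w h)) ` U \<noteq> {}"
      using assms(1) by simp
  next
    fix y assume "y \<in> (\<lambda>w. normR R (\<lambda>h. v h - w h)) ` U"
    then obtain w where "w \<in> U" "y = normR R (\<lambda>h. v h - w h)" by auto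
    then obtain w' where w': "w' \<in> U'" "normR R (\<lambda>h. v' h - w' h) \<le> c * y"
      using assms(3) by blast
    have "Inf ((\<lambda>w. normR R (\<lambda>h. v' h - w h)) ` U') \<le> normR R (\<lambda>h. v' h - w' h)"
      using w'(1) by (intro cInf_lower bdd_belowI[of _ 0]) (auto simp: normR_nonneg)
    with w'(2) assms(2) show "Inf ((\<lambda>w. normR R (\<lambda>h. v' h - w h)) ` U') / c \<le> y"
      by (simp add: divide_le_eq mult.commute)
  qed
  with assms(2) show ?thesis by (simp add: divide_le_eq mult.commute)
qed

lemma sqrt_mean_square_mono:
  fixes a b :: "'a \<Rightarrow> real"
  assumes "\<And>g. g \<in> C \<Longrightarrow> 0 \<le> a g \<and> a g \<le> c * b g" "0 \<le> c"
  shows "sqrt ((1 / real (card C)) * (\<Sum>g\<in>C. (a g)\<^sup>2))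
         \<le> c * sqrt ((1 / real (card C)) * (\<Sum>g\<in>C. (b g)\<^sup>2))"
proof -
  have "(\<Sum>g\<in>C. (a g)\<^sup>2) \<le> (\<Sum>g\<in>C. (c * b g)\<^sup>2)"
    using assms by (intro sum_mono power_mono) auto
  also have "\<dots> = c\<^sup>2 * (\<Sum>g\<in>C. (b g)\<^sup>2)"
    by (simp add: power_mult_distrib sum_distrib_left)
  finally have "(1 / real (card C)) * (\<Sum>g\<in>C. (a g)\<^sup>2)
      \<le> c\<^sup>2 * ((1 / real (card C)) * (\<Sum>g\<in>C. (b g)\<^sup>2))"
    by (simp add: divide_right_mono)
  then have "sqrt ((1 / real (card C)) * (\<Sum>g\<in>C. (a g)\<^sup>2))
      \<le> sqrt (c\<^sup>2 * ((1 / real (card C)) * (\<Sum>g\<in>C. (b g)\<^sup>2)))"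
    using real_sqrt_le_mono by blast
  also have "\<dots> = c * sqrt ((1 / real (card C)) * (\<Sum>g\<in>C. (b g)\<^sup>2))"
    using assms(2) by (simp only: real_sqrt_mult real_sqrt_abs abs_of_nonneg)
  finally show ?thesis .
qed

lemma zero_in_Skew0: "0 \<in> Skew0 D1"
  by (simp add: Skew0_def transpose_def vec_eq_iff)

lemma U_rot0_nonempty: "U_rot0 D1 x0 R \<noteq> {}"
proof -
  have "(\<lambda>_. 0) \<in> U_rot0 D1 x0 R"
    unfolding U_rot0_def using zero_in_Skew0 by force
  then show ?thesis by blast
qed

lemma U_iso0_nonempty: "U_iso0 D1 x0 R \<noteq> {}"
proof -
  have "(\<lambda>_. 0) \<in> U_trans R"
    unfolding U_trans_def by auto
  moreover obtain r where "r \<in> U_rot0 D1 x0 R"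
    using U_rot0_nonempty by blast
  ultimately show ?thesis unfolding U_iso0_def by blast
qed

lemma transpose_rot_in_U_trans:
  assumes "\<And>h. h \<in> R \<Longrightarrow> orthogonal_matrix (rot h)"
  shows "(\<lambda>h. transpose (rot h) *v a) \<in> U_trans R"
  unfolding U_trans_def using assms orthogonal_matrix_vector_cancel by blast

lemma U_trans_eq_transpose_rot:
  assumes "t \<in> U_trans R" "\<And>h. h \<in> R \<Longrightarrow> orthogonal_matrix (rot h)"
  obtains a where "\<And>h. h \<in> R \<Longrightarrow> t h = transpose (rot h) *v a"
proof -
  obtain a where "\<And>h. h \<in> R \<Longrightarrow> rot h *v t h = a"
    using assms(1) unfolding U_trans_def by blast
  then show ?thesis
    using that assms(2) orthogonal_matrix_vector_cancel(2) by metis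
qed

lemma U_rot0_vanishes_at_eone:
  assumes "r \<in> U_rot0 D1 x0 R" "eone \<in> R"
  shows "r eone = 0"
  using assms unfolding U_rot0_def by auto

lemma distR_U_iso0_le_distR_grad:
  assumes "\<And>h. h \<in> R \<Longrightarrow> orthogonal_matrix (rot h)"
  shows "distR R (\<lambda>h. u (emul g h)) (U_iso0 D1 x0 R) \<le> distR R (grad R u g) (U_rot0 D1 x0 R)"
proof -
  have "distR R (\<lambda>h. u (emul g h)) (U_iso0 D1 x0 R) \<le> 1 * distR R (grad R u g) (U_rot0 D1 x0 R)"
  proof (rule distR_le_scaled[OF U_rot0_nonempty])
    fix r assume r: "r \<in> U_rot0 D1 x0 R"
    define w where "w = (\<lambda>h. transpose (rot h) *v u g + r h)"
    have "w \<in> U_iso0 D1 x0 R"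
      unfolding U_iso0_def w_def using r transpose_rot_in_U_trans[OF assms]
      by (intro CollectI exI[of _ "\<lambda>h. transpose (rot h) *v u g"] exI[of _ r]) simp
    moreover have "normR R (\<lambda>h. u (emul g h) - w h) = normR R (\<lambda>h. grad R u g h - r h)"
      by (rule normR_cong) (simp add: w_def grad_def algebra_simps)
    ultimately show "\<exists>w\<in>U_iso0 D1 x0 R.
        normR R (\<lambda>h. u (emul g h) - w h) \<le> 1 * normR R (\<lambda>h. grad R u g h - r h)"
      by force
  qed simp
  then show ?thesis by simp
qed

lemma distR_grad_le_distR_U_iso0:
  assumes orth: "\<And>h. h \<in> R \<Longrightarrow> orthogonal_matrix (rot h)"
    and "finite R" "eone \<in> R"
  shows "distR R (grad R u g) (U_rot0 D1 x0 R)
         \<le> (1 + sqrt (real (card R))) * distR R (\<lambda>h. u (emul g h)) (U_iso0 D1 x0 R)"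
proof (rule distR_le_scaled[OF U_iso0_nonempty])
  show "0 < 1 + sqrt (real (card R))"
    by (simp add: add_pos_nonneg)
next
  fix w assume "w \<in> U_iso0 D1 x0 R"
  then obtain t r where w: "w = (\<lambda>h. t h + r h)" and t: "t \<in> U_trans R" and r: "r \<in> U_rot0 D1 x0 R"
    unfolding U_iso0_def by blast
  obtain a where a: "\<And>h. h \<in> R \<Longrightarrow> t h = transpose (rot h) *v a"
    using U_trans_eq_transpose_rot[OF t orth] by blast
  define e where "e = (\<lambda>h. u (emul g h) - w h)"
  have e_eone: "e eone = u g - a"
    using a[OF \<open>eone \<in> R\<close>] U_rot0_vanishes_at_eone[OF r \<open>eone \<in> R\<close>] by (simp add: e_def w)
  have "grad R u g h - r h = e h + - (transpose (rot h) *v e eone)" if "h \<in> R" for h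
    unfolding e_eone using that
    by (simp add: e_def w a grad_def matrix_vector_mult_diff_distrib algebra_simps)
  then have "normR R (\<lambda>h. grad R u g h - r h) = normR R (\<lambda>h. e h + - (transpose (rot h) *v e eone))"
    by (rule normR_cong)
  also have "\<dots> \<le> normR R e + normR R (\<lambda>h. - (transpose (rot h) *v e eone))"
    by (rule normR_add_le)
  also have "normR R (\<lambda>h. - (transpose (rot h) *v e eone)) = sqrt (real (card R)) * norm (e eone)"
  proof (rule normR_const_norm)
    fix h assume "h \<in> R"
    then have "orthogonal_matrix (transpose (rot h))"
      using orth by simp
    then show "norm (- (transpose (rot h) *v e eone)) = norm (e eone)"
      by (simp only: norm_minus_cancel norm_orthogonal_matrix_mult)
  qed simp
  also have "\<dots> \<le> sqrt (real (card R)) * normR R e"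
    using norm_le_normR[OF \<open>finite R\<close> \<open>eone \<in> R\<close>] by (intro mult_left_mono) auto
  finally have "normR R (\<lambda>h. grad R u g h - r h) \<le> (1 + sqrt (real (card R))) * normR R e"
    by (simp add: algebra_simps)
  then show "\<exists>r\<in>U_rot0 D1 x0 R.
      normR R (\<lambda>h. grad R u g h - r h) \<le> (1 + sqrt (real (card R))) * normR R (\<lambda>h. u (emul g h) - w h)"
    using r unfolding e_def by blast
qed

lemma norm_R0_le_semi_R0:
  assumes "\<And>h. h \<in> R \<Longrightarrow> orthogonal_matrix (rot h)" "1 \<le> c"
  shows "norm_R0 D1 x0 R C u \<le> c * semi_R0 D1 x0 R C u"
  unfolding norm_R0_def semi_R0_def
proof (rule sqrt_mean_square_mono)
  fix g
  have "distR R (\<lambda>h. u (emul g h)) (U_iso0 D1 x0 R) \<le> 1 * distR R (grad R u g) (U_rot0 D1 x0 R)"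
    using distR_U_iso0_le_distR_grad[OF assms(1)] by simp
  also have "\<dots> \<le> c * distR R (grad R u g) (U_rot0 D1 x0 R)"
    using assms(2) distR_nonneg[OF U_rot0_nonempty] by (intro mult_right_mono)
  finally show "0 \<le> distR R (\<lambda>h. u (emul g h)) (U_iso0 D1 x0 R) \<and>
      distR R (\<lambda>h. u (emul g h)) (U_iso0 D1 x0 R) \<le> c * distR R (grad R u g) (U_rot0 D1 x0 R)"
    using distR_nonneg[OF U_iso0_nonempty] by blast
qed (use assms(2) in simp)

lemma semi_R0_le_norm_R0:
  assumes "\<And>h. h \<in> R \<Longrightarrow> orthogonal_matrix (rot h)" "finite R" "eone \<in> R"
  shows "semi_R0 D1 x0 R C u \<le> (1 + sqrt (real (card R))) * norm_R0 D1 x0 R C u"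
  unfolding norm_R0_def semi_R0_def
  using distR_nonneg[OF U_rot0_nonempty] distR_grad_le_distR_U_iso0[OF assms]
  by (intro sqrt_mean_square_mono) auto

theorem proposition3p17:
  fixes D1 K :: "'n::finite set" and S G T R :: "'n eel set" and m0 :: nat
    and C :: "nat \<Rightarrow> 'n eel set" and x0 :: "real^'n"
  assumes "standing_setting D1 S G T m0 C x0 K"
    and "finite R" and "R \<subseteq> G" and "eone \<in> R"
  shows "\<exists>c>0. \<forall>N u. N > 0 \<and> m0 dvd N \<and> periodic G (TN T N) u \<longrightarrow>
           norm_R0 D1 x0 R (C N) u \<le> c * semi_R0 D1 x0 R (C N) u \<and>
           semi_R0 D1 x0 R (C N) u \<le> c * norm_R0 D1 x0 R (C N) u"
proof -
  have orth: "\<And>h. h \<in> R \<Longrightarrow> orthogonal_matrix (rot h)"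
    using standing_setting_orthogonal_rot[OF assms(1)] assms(3) by blast
  define c where "c = 1 + sqrt (real (card R))"
  have "1 \<le> c" by (simp add: c_def)
  then have "\<forall>N u. norm_R0 D1 x0 R (C N) u \<le> c * semi_R0 D1 x0 R (C N) u \<and>
                   semi_R0 D1 x0 R (C N) u \<le> c * norm_R0 D1 x0 R (C N) u"
    using norm_R0_le_semi_R0[OF orth] semi_R0_le_norm_R0[OF orth assms(2,4)] by (simp add: c_def)
  with \<open>1 \<le> c\<close> show ?thesis
    by (intro exI[of _ c]) auto
qed

end
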